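(* For each $n$, let $W^{(n)}\in\{0,1\}^{n\times n}$ be a random adjacency matrix drawn from a latent space model with population matrix $\mathscr{W}^{(n)}=\mathbb{E}(W^{(n)})\in[0,1]^{n\times n}$, and let $L^{(n)}$ and $\mathscr{L}^{(n)}$ be the observed and population normalized graph Laplacians. Let $\tau_n=\min_{i=1,\dots,n}\mathscr{D}^{(n)}_{ii}/n$. If there exists $N>0$ such that $\tau_n^2\log n>2$ for all $n>N$, then \[ \bigl\|L^{(n)}L^{(n)}-\mathscr{L}^{(n)}\mathscr{L}^{(n)}\bigr\|_F=o\Bigl(\frac{\log n}{\tau_n^{2}n^{1/2}}\Bigr)\quad\text{almost surely.} \]
   Context: Latent space model (with the latent vectors $z_1,\dots,z_n$ treated as fixed): $W$ is a symmetric $\{0,1\}$-valued $n\times n$ matrix with $W_{ii}=0$ for all $i$, and the entries $W_{ij}$, $i<j$, are independent Bernoulli random variables with means $\mathscr{W}_{ij}\in[0,1]$; the population matrix is $\mathscr{W}=\mathbb{E}(W)$ (so $\mathscr{W}_{ii}=0$). Observed quantities: $D$ is diagonal with $D_{ii}=\sum_k W_{ik}$ and $L=D^{-1/2}WD^{-1/2}$. Population quantities: $\mathscr{D}$ is diagonal with $\mathscr{D}_{ii}=\sum_k\mathscr{W}_{ik}$ and $\mathscr{L}=\mathscr{D}^{-1/2}\mathscr{W}\mathscr{D}^{-1/2}$. A superscript $(n)$ indicates the objects for the model with $n$ nodes. $\|\cdot\|_F$ is the Frobenius norm. *)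

theory Defs
  imports "HOL-Probability.Probability" "HOL-Library.Landau_Symbols"
begin

text \<open>n x n matrices are represented as functions nat => nat => real,
  with only the entries with indices < n being relevant.\<close>

definition degree_mat :: "nat \<Rightarrow> (nat \<Rightarrow> nat \<Rightarrow> real) \<Rightarrow> nat \<Rightarrow> real" where
  "degree_mat n A i = (\<Sum>k<n. A i k)"

text \<open>Normalized Laplacian D^(-1/2) A D^(-1/2); for zero degree we use the
  Isabelle convention 1 / 0 = 0.\<close>
definition norm_laplacian :: "nat \<Rightarrow> (nat \<Rightarrow> nat \<Rightarrow> real) \<Rightarrow> nat \<Rightarrow> nat \<Rightarrow> real" where
  "norm_laplacian n A i j =
     (1 / sqrt (degree_mat n A i)) * A i j * (1 / sqrt (degree_mat n A j))"

definition mat_mult_n :: "nat \<Rightarrow> (nat \<Rightarrow> nat \<Rightarrow> real) \<Rightarrow> (nat \<Rightarrow> nat \<Rightarrow> real) \<Rightarrow> nat \<Rightarrow> nat \<Rightarrow> real" where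
  "mat_mult_n n A B i j = (\<Sum>k<n. A i k * B k j)"

definition frob_norm :: "nat \<Rightarrow> (nat \<Rightarrow> nat \<Rightarrow> real) \<Rightarrow> real" where
  "frob_norm n A = sqrt (\<Sum>i<n. \<Sum>j<n. (A i j)\<^sup>2)"

definition tau :: "nat \<Rightarrow> (nat \<Rightarrow> nat \<Rightarrow> real) \<Rightarrow> real" where
  "tau n P = (MIN i\<in>{..<n}. degree_mat n P i) / real n"

end

theory Submission
  imports Defs "HOL-Real_Asymp.Real_Asymp"
begin

text \<open>By Hoeffding's inequality, with probability \<open>1 - O(n\<^sup>-\<^sup>2)\<close> every degree \<open>D\<^sub>i\<^sub>i\<close> is within
  \<open>r = sqrt (2 n ln n)\<close> of \<open>\<D>\<^sub>i\<^sub>i\<close>, and every two-path sum \<open>\<Sum>\<^sub>k W\<^sub>i\<^sub>k W\<^sub>k\<^sub>j / \<D>\<^sub>k\<^sub>k\<close>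
  (\<open>i \<noteq> j\<close>) is within \<open>r / (\<tau>\<^sub>n n)\<close> of its mean; the summands are independent because distinct
  \<open>k\<close> involve disjoint edges. On this event an elementary perturbation estimate bounds the
  off-diagonal entries of \<open>LL - \<L>\<L>\<close> by \<open>O(sqrt (ln n) / (\<tau>\<^sub>n\<^sup>2 n))\<close> and the diagonal ones by
  \<open>O(1 / (\<tau>\<^sub>n n))\<close>, so the Frobenius norm is \<open>O(sqrt (ln n) / (\<tau>\<^sub>n\<^sup>2 sqrt n))\<close>, which is
  \<open>o(ln n / (\<tau>\<^sub>n\<^sup>2 sqrt n))\<close>. The failure probabilities are summable, so by Borel--Cantelli
  the event holds for all large \<open>n\<close> almost surely. The condition \<open>\<tau>\<^sub>n\<^sup>2 ln n > 2\<close> guarantees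
  \<open>r \<le> \<tau>\<^sub>n n / 2\<close>, i.e.\ the observed degrees stay comparable to the population ones.\<close>

section \<open>Perturbation of the squared normalized Laplacian\<close>

definition two_path_sum :: "nat \<Rightarrow> (nat \<Rightarrow> nat \<Rightarrow> real) \<Rightarrow> (nat \<Rightarrow> real) \<Rightarrow> nat \<Rightarrow> nat \<Rightarrow> real" where
  "two_path_sum n A d i j = (\<Sum>k<n. A i k * A k j / d k)"

lemma inverse_sqrt_mult_self: "(x::real) \<ge> 0 \<Longrightarrow> 1 / sqrt x * (1 / sqrt x) = 1 / x"
  by (simp add: real_sqrt_mult[symmetric])

lemma degree_mat_nonneg:
  assumes "\<And>k. k < n \<Longrightarrow> 0 \<le> A i k"
  shows "0 \<le> degree_mat n A i"
  unfolding degree_mat_def using assms by (auto intro: sum_nonneg)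

lemma mat_mult_norm_laplacian_self:
  assumes nonneg: "\<And>i k. i < n \<Longrightarrow> k < n \<Longrightarrow> 0 \<le> A i k"
  shows "mat_mult_n n (norm_laplacian n A) (norm_laplacian n A) i j =
     1 / sqrt (degree_mat n A i) * (1 / sqrt (degree_mat n A j)) * two_path_sum n A (degree_mat n A) i j"
proof -
  have "norm_laplacian n A i k * norm_laplacian n A k j =
      1 / sqrt (degree_mat n A i) * (1 / sqrt (degree_mat n A j)) * (A i k * A k j / degree_mat n A k)"
    if "k < n" for k
  proof -
    have "1 / sqrt (degree_mat n A k) * (1 / sqrt (degree_mat n A k)) = 1 / degree_mat n A k"
      using that nonneg by (intro inverse_sqrt_mult_self degree_mat_nonneg) auto
    then show ?thesis unfolding norm_laplacian_def by (simp add: field_simps)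
  qed
  then show ?thesis
    unfolding mat_mult_n_def two_path_sum_def by (simp add: sum_distrib_left)
qed

lemma inverse_diff_le:
  fixes d e m s :: real
  assumes "m > 0" "d \<ge> m / 2" "e \<ge> m" "\<bar>d - e\<bar> \<le> s"
  shows "\<bar>1 / d - 1 / e\<bar> \<le> 2 * s / m\<^sup>2"
proof -
  have pos: "d > 0" "e > 0" using assms by auto
  have "\<bar>1 / d - 1 / e\<bar> = \<bar>d - e\<bar> / (d * e)"
    using pos by (simp add: field_simps abs_divide abs_minus_commute)
  also have "\<dots> \<le> s / (d * e)" using assms pos by (intro divide_right_mono) auto
  also have "\<dots> \<le> s / (m / 2 * m)"
    using assms pos by (intro divide_left_mono mult_mono) (auto simp: abs_le_iff)
  also have "\<dots> = 2 * s / m\<^sup>2" by (simp add: power2_eq_square)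
  finally show ?thesis .
qed

lemma abs_inverse_diff_le:
  fixes x y :: real
  assumes "0 < x" "0 < y"
  shows "\<bar>1 / x - 1 / y\<bar> \<le> \<bar>y\<^sup>2 - x\<^sup>2\<bar> / (y * x * y)"
proof -
  have "1 / x - 1 / y = (y - x) / (x * y)" using assms by (simp add: field_simps)
  also have "y - x = (y\<^sup>2 - x\<^sup>2) / (x + y)" using assms by (simp add: field_simps power2_eq_square)
  finally have "\<bar>1 / x - 1 / y\<bar> = \<bar>y\<^sup>2 - x\<^sup>2\<bar> / ((x + y) * x * y)"
    using assms by (simp add: abs_divide mult.assoc)
  also have "\<dots> \<le> \<bar>y\<^sup>2 - x\<^sup>2\<bar> / (y * x * y)"
    using assms by (intro divide_left_mono mult_right_mono) auto
  finally show ?thesis .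
qed

lemma abs_mult_diff_le:
  fixes a a' b b' s :: real
  assumes "\<bar>a - a'\<bar> \<le> s" "\<bar>b - b'\<bar> \<le> s" "0 \<le> b" "0 \<le> a'"
  shows "\<bar>a * b - a' * b'\<bar> \<le> s * (b + a')"
proof -
  have "\<bar>a * b - a' * b'\<bar> = \<bar>(a - a') * b + a' * (b - b')\<bar>" by (simp add: algebra_simps)
  also have "\<dots> \<le> \<bar>a - a'\<bar> * b + a' * \<bar>b - b'\<bar>"
    using assms(3,4) abs_triangle_ineq[of "(a - a') * b" "a' * (b - b')"] by (simp add: abs_mult)
  also have "\<dots> \<le> s * b + a' * s"
    using assms by (intro add_mono mult_right_mono mult_left_mono) auto
  finally show ?thesis by (simp add: algebra_simps)
qed

lemma inverse_sqrt_mult_perturb: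
  fixes d\<^sub>i d\<^sub>j e\<^sub>i e\<^sub>j a m s :: real
  assumes m: "m > 0" and ei: "e\<^sub>i \<ge> m" and ej: "e\<^sub>j \<ge> m"
    and si: "\<bar>d\<^sub>i - e\<^sub>i\<bar> \<le> s" and sj: "\<bar>d\<^sub>j - e\<^sub>j\<bar> \<le> s" and s: "0 \<le> s" "s \<le> m / 2"
    and a: "0 \<le> a" "a \<le> e\<^sub>i / m" "a \<le> e\<^sub>j / m"
  shows "a * \<bar>1 / sqrt (d\<^sub>i * d\<^sub>j) - 1 / sqrt (e\<^sub>i * e\<^sub>j)\<bar> \<le> 5 * s / m\<^sup>2"
proof -
  define x where "x = sqrt (d\<^sub>i * d\<^sub>j)"
  define y where "y = sqrt (e\<^sub>i * e\<^sub>j)"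
  have di: "m / 2 \<le> d\<^sub>i" "d\<^sub>i \<le> 3 / 2 * e\<^sub>i" and dj: "m / 2 \<le> d\<^sub>j"
    using si sj s ei ej m by linarith+
  have x2: "x\<^sup>2 = d\<^sub>i * d\<^sub>j" and y2: "y\<^sup>2 = e\<^sub>i * e\<^sub>j" and pos: "x > 0" "y > 0"
    unfolding x_def y_def using di dj ei ej m by auto
  have "m / 2 * (m / 2) \<le> d\<^sub>i * d\<^sub>j" using di dj m by (intro mult_mono) auto
  then have xm: "m / 2 \<le> x" unfolding x_def by (intro real_le_rsqrt) (simp add: power2_eq_square)
  have square_diff: "\<bar>y\<^sup>2 - x\<^sup>2\<bar> \<le> s * (e\<^sub>j + d\<^sub>i)"
    unfolding x2 y2 using si sj ej di m by (intro abs_mult_diff_le) (auto simp: abs_minus_commute)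
  have "\<bar>1 / x - 1 / y\<bar> \<le> \<bar>y\<^sup>2 - x\<^sup>2\<bar> / (y * x * y)" using pos by (rule abs_inverse_diff_le)
  also have "\<dots> \<le> s * (e\<^sub>j + d\<^sub>i) / (y * x * y)"
    using square_diff pos by (intro divide_right_mono) auto
  finally have "a * \<bar>1 / x - 1 / y\<bar> \<le> a * (s * (e\<^sub>j + d\<^sub>i) / (y * x * y))"
    using a(1) by (intro mult_left_mono)
  also have "\<dots> = s / x * ((a * e\<^sub>j + a * d\<^sub>i) / y\<^sup>2)"
    using pos by (simp add: field_simps power2_eq_square)
  also have "\<dots> \<le> s / x * (5 / 2 / m)"
  proof (rule mult_left_mono)
    have "a * e\<^sub>j \<le> e\<^sub>i / m * e\<^sub>j" using a ej m by (intro mult_right_mono) auto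
    moreover have "a * d\<^sub>i \<le> e\<^sub>j / m * (3 / 2 * e\<^sub>i)" using a di m by (intro mult_mono) auto
    ultimately have "a * e\<^sub>j + a * d\<^sub>i \<le> 5 / 2 * (e\<^sub>i * e\<^sub>j) / m" by (simp add: field_simps)
    then show "(a * e\<^sub>j + a * d\<^sub>i) / y\<^sup>2 \<le> 5 / 2 / m"
      using y2 ei ej m by (simp add: divide_simps)
  qed (use s pos in auto)
  also have "\<dots> \<le> s / (m / 2) * (5 / 2 / m)"
    using s xm m by (intro mult_right_mono divide_left_mono) auto
  also have "\<dots> = 5 * s / m\<^sup>2" by (simp add: power2_eq_square)
  finally show ?thesis unfolding x_def y_def .
qed

text \<open>In the application \<open>a\<close>, \<open>b'\<close> and \<open>b\<close> are the two-path sums of \<open>P\<close> and of \<open>W\<close> normalised by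
  the population degrees \<open>e\<close> and of \<open>W\<close> normalised by the observed degrees \<open>d\<close>, and \<open>c\<close> is the
  unnormalised two-path count of \<open>W\<close>.\<close>
lemma normalized_entry_perturb:
  fixes d\<^sub>i d\<^sub>j e\<^sub>i e\<^sub>j a b b' c m s t :: real
  assumes m: "m > 0" and ei: "e\<^sub>i \<ge> m" and ej: "e\<^sub>j \<ge> m"
    and si: "\<bar>d\<^sub>i - e\<^sub>i\<bar> \<le> s" and sj: "\<bar>d\<^sub>j - e\<^sub>j\<bar> \<le> s" and s: "0 \<le> s" "s \<le> m / 2"
    and b: "\<bar>b - b'\<bar> \<le> 2 * s / m\<^sup>2 * c" and c: "0 \<le> c" "c \<le> d\<^sub>i" "c \<le> d\<^sub>j"
    and b': "\<bar>b' - a\<bar> \<le> t" and a: "0 \<le> a" "a \<le> e\<^sub>i / m" "a \<le> e\<^sub>j / m"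
  shows "\<bar>1 / sqrt d\<^sub>i * (1 / sqrt d\<^sub>j) * b - 1 / sqrt e\<^sub>i * (1 / sqrt e\<^sub>j) * a\<bar>
           \<le> 7 * s / m\<^sup>2 + 2 * t / m"
proof -
  define x where "x = sqrt (d\<^sub>i * d\<^sub>j)"
  define y where "y = sqrt (e\<^sub>i * e\<^sub>j)"
  have di: "m / 2 \<le> d\<^sub>i" and dj: "m / 2 \<le> d\<^sub>j" using si sj s ei ej by linarith+
  have pos: "x > 0" "y > 0" unfolding x_def y_def using di dj ei ej m by auto
  have "m / 2 * (m / 2) \<le> d\<^sub>i * d\<^sub>j" using di dj m by (intro mult_mono) auto
  then have xm: "m / 2 \<le> x" unfolding x_def by (intro real_le_rsqrt) (simp add: power2_eq_square)
  have "c * c \<le> d\<^sub>i * d\<^sub>j" using c by (intro mult_mono) auto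
  then have cx: "c \<le> x" unfolding x_def by (intro real_le_rsqrt) (simp add: power2_eq_square)
  have "\<bar>b - b'\<bar> / x \<le> 2 * s / m\<^sup>2 * c / x" using b pos by (intro divide_right_mono) auto
  also have "\<dots> = 2 * s / m\<^sup>2 * (c / x)" by simp
  also have "\<dots> \<le> 2 * s / m\<^sup>2" using cx pos s by (intro mult_left_le) auto
  finally have first: "\<bar>b - b'\<bar> / x \<le> 2 * s / m\<^sup>2" .
  have "\<bar>b' - a\<bar> / x \<le> t / (m / 2)"
    using b' xm pos m by (intro frac_le) auto
  then have second: "\<bar>b' - a\<bar> / x \<le> 2 * t / m" by (simp add: mult.commute)
  have third: "a * \<bar>1 / x - 1 / y\<bar> \<le> 5 * s / m\<^sup>2"
    unfolding x_def y_def using assms by (intro inverse_sqrt_mult_perturb) auto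
  have "1 / x * b - 1 / y * a = (b - b') / x + (b' - a) / x + a * (1 / x - 1 / y)"
    using pos by (simp add: field_simps)
  then have "\<bar>1 / x * b - 1 / y * a\<bar> \<le> \<bar>b - b'\<bar> / x + \<bar>b' - a\<bar> / x + a * \<bar>1 / x - 1 / y\<bar>"
    using pos a by (simp add: abs_mult abs_divide abs_triangle_ineq order_trans[OF abs_triangle_ineq add_mono])
  also have "\<dots> \<le> 7 * s / m\<^sup>2 + 2 * t / m" using first second third by simp
  finally show ?thesis unfolding x_def y_def by (simp add: real_sqrt_mult)
qed

lemma two_path_sum_nonneg:
  assumes "\<And>k. k < n \<Longrightarrow> 0 \<le> A i k \<and> 0 \<le> A k j \<and> 0 \<le> d k"
  shows "0 \<le> two_path_sum n A d i j"
  unfolding two_path_sum_def using assms by (intro sum_nonneg divide_nonneg_nonneg mult_nonneg_nonneg) auto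

lemma two_path_sum_swap:
  assumes "\<And>k. k < n \<Longrightarrow> A i k = A k i \<and> A j k = A k j"
  shows "two_path_sum n A d i j = two_path_sum n A d j i"
  unfolding two_path_sum_def using assms by (intro sum.cong) (auto simp: mult.commute)

lemma two_path_sum_le_degree:
  assumes A: "\<And>k. k < n \<Longrightarrow> 0 \<le> A i k \<and> 0 \<le> A k j \<and> A k j \<le> 1"
    and d: "r > 0" "\<And>k. k < n \<Longrightarrow> r \<le> d k"
  shows "two_path_sum n A d i j \<le> degree_mat n A i / r"
proof -
  have "A i k * A k j / d k \<le> A i k * (1 / r)" if "k < n" for k
  proof -
    have "A k j / d k \<le> 1 / r" using A[OF that] d(1) d(2)[OF that] by (intro frac_le) auto
    then show ?thesis using A[OF that] by (metis mult_left_mono times_divide_eq_right)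
  qed
  then have "two_path_sum n A d i j \<le> (\<Sum>k<n. A i k * (1 / r))"
    unfolding two_path_sum_def by (intro sum_mono) auto
  then show ?thesis unfolding degree_mat_def by (simp add: sum_divide_distrib)
qed

lemma two_path_sum_bounds:
  assumes A: "\<And>i j. i < n \<Longrightarrow> j < n \<Longrightarrow> 0 \<le> A i j \<and> A i j \<le> 1 \<and> A i j = A j i"
    and d: "r > 0" "\<And>k. k < n \<Longrightarrow> r \<le> d k" and ij: "i < n" "j < n"
  shows "0 \<le> two_path_sum n A d i j" "two_path_sum n A d i j \<le> degree_mat n A i / r"
    "two_path_sum n A d i j \<le> degree_mat n A j / r"
proof -
  show "0 \<le> two_path_sum n A d i j"
    using A d ij by (intro two_path_sum_nonneg) (auto intro: order.trans[OF less_imp_le])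
  show "two_path_sum n A d i j \<le> degree_mat n A i / r"
    using A d ij by (intro two_path_sum_le_degree) auto
  have "two_path_sum n A d j i \<le> degree_mat n A j / r"
    using A d ij by (intro two_path_sum_le_degree) auto
  then show "two_path_sum n A d i j \<le> degree_mat n A j / r"
    using A ij by (subst two_path_sum_swap) auto
qed

lemma two_path_sum_diff_le:
  assumes "\<And>k. k < n \<Longrightarrow> 0 \<le> A i k * A k j" and "\<And>k. k < n \<Longrightarrow> \<bar>1 / d k - 1 / d' k\<bar> \<le> r"
  shows "\<bar>two_path_sum n A d i j - two_path_sum n A d' i j\<bar> \<le> r * two_path_sum n A (\<lambda>_. 1) i j"
proof -
  have "\<bar>A i k * A k j * (1 / d k - 1 / d' k)\<bar> \<le> A i k * A k j * r" if "k < n" for k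
  proof -
    have "\<bar>A i k * A k j * (1 / d k - 1 / d' k)\<bar> = A i k * A k j * \<bar>1 / d k - 1 / d' k\<bar>"
      using assms(1)[OF that] abs_mult[of "A i k * A k j"] by simp
    then show ?thesis using assms that by (simp add: mult_left_mono)
  qed
  then have "\<bar>\<Sum>k<n. A i k * A k j * (1 / d k - 1 / d' k)\<bar> \<le> (\<Sum>k<n. A i k * A k j * r)"
    by (intro order_trans[OF sum_abs] sum_mono) auto
  then show ?thesis
    unfolding two_path_sum_def
    by (simp add: sum_subtractf[symmetric] right_diff_distrib sum_distrib_left mult.commute)
qed

lemma norm_laplacian_square_diag_bounds:
  assumes A: "\<And>i k. i < n \<Longrightarrow> k < n \<Longrightarrow> 0 \<le> A i k \<and> A i k \<le> 1"
    and r: "r > 0" "\<And>k. k < n \<Longrightarrow> r \<le> degree_mat n A k" and i: "i < n"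
  shows "0 \<le> mat_mult_n n (norm_laplacian n A) (norm_laplacian n A) i i
    \<and> mat_mult_n n (norm_laplacian n A) (norm_laplacian n A) i i \<le> 1 / r"
proof -
  define d where "d = degree_mat n A i"
  have d: "d > 0" using r i unfolding d_def by (metis order.strict_trans2)
  have eq: "mat_mult_n n (norm_laplacian n A) (norm_laplacian n A) i i
      = 1 / d * two_path_sum n A (degree_mat n A) i i"
    using mat_mult_norm_laplacian_self[of n A i i] A inverse_sqrt_mult_self[of d] d
    unfolding d_def by auto
  have "0 \<le> two_path_sum n A (degree_mat n A) i i"
    using A i r by (intro two_path_sum_nonneg) (auto intro: order.trans[OF less_imp_le])
  moreover have "two_path_sum n A (degree_mat n A) i i \<le> d / r"
    unfolding d_def using A i r by (intro two_path_sum_le_degree) auto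
  ultimately show ?thesis unfolding eq using d r by (auto simp: field_simps)
qed

lemma norm_laplacian_square_offdiag_perturb:
  fixes w p :: "nat \<Rightarrow> nat \<Rightarrow> real"
  assumes w: "\<And>i j. i < n \<Longrightarrow> j < n \<Longrightarrow> 0 \<le> w i j \<and> w i j \<le> 1 \<and> w i j = w j i"
    and p: "\<And>i j. i < n \<Longrightarrow> j < n \<Longrightarrow> 0 \<le> p i j \<and> p i j \<le> 1 \<and> p i j = p j i"
    and m: "m > 0" "\<And>k. k < n \<Longrightarrow> m \<le> degree_mat n p k" and s: "0 \<le> s" "s \<le> m / 2"
    and degree_dev: "\<And>k. k < n \<Longrightarrow> \<bar>degree_mat n w k - degree_mat n p k\<bar> \<le> s"
    and path_dev: "\<bar>two_path_sum n w (degree_mat n p) i j - two_path_sum n p (degree_mat n p) i j\<bar> \<le> t"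
    and ij: "i < n" "j < n"
  shows "\<bar>mat_mult_n n (norm_laplacian n w) (norm_laplacian n w) i j
          - mat_mult_n n (norm_laplacian n p) (norm_laplacian n p) i j\<bar> \<le> 7 * s / m\<^sup>2 + 2 * t / m"
proof -
  define c where "c = two_path_sum n w (\<lambda>_. 1) i j"
  define a where "a = two_path_sum n p (degree_mat n p) i j"
  have c: "0 \<le> c" "c \<le> degree_mat n w i" "c \<le> degree_mat n w j"
    unfolding c_def using two_path_sum_bounds[of n w 1 "\<lambda>_. 1", OF w _ _ ij] by simp_all
  have a: "0 \<le> a" "a \<le> degree_mat n p i / m" "a \<le> degree_mat n p j / m"
    unfolding a_def using two_path_sum_bounds[of n p m, OF p m ij] by simp_all
  have "\<bar>1 / degree_mat n w k - 1 / degree_mat n p k\<bar> \<le> 2 * s / m\<^sup>2" if "k < n" for k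
    using degree_dev[OF that] m(2)[OF that] m(1) s by (intro inverse_diff_le) (auto simp: abs_le_iff)
  then have b: "\<bar>two_path_sum n w (degree_mat n w) i j - two_path_sum n w (degree_mat n p) i j\<bar>
      \<le> 2 * s / m\<^sup>2 * c"
    unfolding c_def using w ij by (intro two_path_sum_diff_le) auto
  have eq_w: "mat_mult_n n (norm_laplacian n w) (norm_laplacian n w) i j =
      1 / sqrt (degree_mat n w i) * (1 / sqrt (degree_mat n w j)) * two_path_sum n w (degree_mat n w) i j"
    using w by (intro mat_mult_norm_laplacian_self) auto
  have eq_p: "mat_mult_n n (norm_laplacian n p) (norm_laplacian n p) i j =
      1 / sqrt (degree_mat n p i) * (1 / sqrt (degree_mat n p j)) * a"
    unfolding a_def using p by (intro mat_mult_norm_laplacian_self) auto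
  show ?thesis
    unfolding eq_w eq_p
    by (rule normalized_entry_perturb[OF m(1) m(2)[OF ij(1)] m(2)[OF ij(2)]
          degree_dev[OF ij(1)] degree_dev[OF ij(2)] s b c path_dev[folded a_def] a])
qed

lemma frob_norm_nonneg: "0 \<le> frob_norm n E"
  unfolding frob_norm_def by (simp add: sum_nonneg)

lemma frob_norm_le_diag_offdiag:
  assumes diag: "\<And>i. i < n \<Longrightarrow> \<bar>E i i\<bar> \<le> a"
    and offdiag: "\<And>i j. i < n \<Longrightarrow> j < n \<Longrightarrow> i \<noteq> j \<Longrightarrow> \<bar>E i j\<bar> \<le> b"
    and "0 \<le> a" "0 \<le> b"
  shows "frob_norm n E \<le> sqrt (real n) * a + real n * b"
proof -
  have "(E i j)\<^sup>2 \<le> (if j = i then a\<^sup>2 else 0) + b\<^sup>2" if "i < n" "j < n" for i j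
  proof (cases "j = i")
    case True
    then have "(E i j)\<^sup>2 \<le> a\<^sup>2" using power_mono[OF diag[OF that(1)] abs_ge_zero, of 2] by simp
    then show ?thesis using True by (simp add: add_increasing2)
  next
    case False
    then show ?thesis using power_mono[OF offdiag[OF that] abs_ge_zero, of 2] by simp
  qed
  then have "(\<Sum>i<n. \<Sum>j<n. (E i j)\<^sup>2) \<le> (\<Sum>i<n. \<Sum>j<n. (if j = i then a\<^sup>2 else 0) + b\<^sup>2)"
    by (intro sum_mono) auto
  also have "\<dots> = real n * a\<^sup>2 + (real n * b)\<^sup>2"
    by (simp add: sum.distrib power2_eq_square algebra_simps)
  also have "\<dots> \<le> (sqrt (real n) * a + real n * b)\<^sup>2"
    using assms(3,4) by (simp add: power2_sum power_mult_distrib)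
  finally show ?thesis
    unfolding frob_norm_def using assms(3,4) by (intro real_le_lsqrt) auto
qed

lemma frob_norm_laplacian_square_diff_le:
  fixes w p :: "nat \<Rightarrow> nat \<Rightarrow> real"
  assumes w: "\<And>i j. i < n \<Longrightarrow> j < n \<Longrightarrow> 0 \<le> w i j \<and> w i j \<le> 1 \<and> w i j = w j i"
    and p: "\<And>i j. i < n \<Longrightarrow> j < n \<Longrightarrow> 0 \<le> p i j \<and> p i j \<le> 1 \<and> p i j = p j i"
    and m: "m > 0" "\<And>k. k < n \<Longrightarrow> m \<le> degree_mat n p k" and s: "0 \<le> s" "s \<le> m / 2" and "0 \<le> t"
    and degree_dev: "\<And>k. k < n \<Longrightarrow> \<bar>degree_mat n w k - degree_mat n p k\<bar> \<le> s"
    and path_dev: "\<And>i j. i < n \<Longrightarrow> j < n \<Longrightarrow> i \<noteq> j \<Longrightarrow>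
      \<bar>two_path_sum n w (degree_mat n p) i j - two_path_sum n p (degree_mat n p) i j\<bar> \<le> t"
  shows "frob_norm n (\<lambda>i j. mat_mult_n n (norm_laplacian n w) (norm_laplacian n w) i j
                          - mat_mult_n n (norm_laplacian n p) (norm_laplacian n p) i j)
         \<le> 2 * sqrt (real n) / m + real n * (7 * s / m\<^sup>2 + 2 * t / m)"
proof -
  have "\<bar>mat_mult_n n (norm_laplacian n w) (norm_laplacian n w) i i
         - mat_mult_n n (norm_laplacian n p) (norm_laplacian n p) i i\<bar> \<le> 2 / m" if "i < n" for i
  proof -
    have "m / 2 \<le> degree_mat n w k" if "k < n" for k
      using degree_dev[OF that] m(2)[OF that] s by (auto simp: abs_le_iff)
    then have "0 \<le> mat_mult_n n (norm_laplacian n w) (norm_laplacian n w) i i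
        \<and> mat_mult_n n (norm_laplacian n w) (norm_laplacian n w) i i \<le> 1 / (m / 2)"
      using w m \<open>i < n\<close> by (intro norm_laplacian_square_diag_bounds) auto
    moreover have "0 \<le> mat_mult_n n (norm_laplacian n p) (norm_laplacian n p) i i
        \<and> mat_mult_n n (norm_laplacian n p) (norm_laplacian n p) i i \<le> 1 / m"
      using p m \<open>i < n\<close> by (intro norm_laplacian_square_diag_bounds) auto
    moreover have "1 / m \<le> 2 / m" using m(1) by (simp add: divide_right_mono)
    ultimately show ?thesis by (simp add: abs_le_iff)
  qed
  moreover have "\<bar>mat_mult_n n (norm_laplacian n w) (norm_laplacian n w) i j
         - mat_mult_n n (norm_laplacian n p) (norm_laplacian n p) i j\<bar> \<le> 7 * s / m\<^sup>2 + 2 * t / m"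
    if "i < n" "j < n" "i \<noteq> j" for i j
    using assms that by (intro norm_laplacian_square_offdiag_perturb) auto
  ultimately have "frob_norm n (\<lambda>i j. mat_mult_n n (norm_laplacian n w) (norm_laplacian n w) i j
                          - mat_mult_n n (norm_laplacian n p) (norm_laplacian n p) i j)
      \<le> sqrt (real n) * (2 / m) + real n * (7 * s / m\<^sup>2 + 2 * t / m)"
    using m s \<open>0 \<le> t\<close> by (intro frob_norm_le_diag_offdiag) auto
  then show ?thesis by (simp add: mult.commute)
qed

lemma tau_bounds:
  assumes n: "0 < n" and A: "\<And>i j. i < n \<Longrightarrow> j < n \<Longrightarrow> 0 \<le> A i j \<and> A i j \<le> 1"
  shows "0 \<le> tau n A" "tau n A \<le> 1" "\<And>k. k < n \<Longrightarrow> tau n A * real n \<le> degree_mat n A k"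
proof -
  have min: "tau n A * real n = Min (degree_mat n A ` {..<n})"
    unfolding tau_def using n by simp
  then show "\<And>k. k < n \<Longrightarrow> tau n A * real n \<le> degree_mat n A k" by simp
  have "Min (degree_mat n A ` {..<n}) \<in> degree_mat n A ` {..<n}" using n by (intro Min_in) auto
  then obtain k where k: "k < n" "tau n A * real n = degree_mat n A k" unfolding min by auto
  have "0 \<le> degree_mat n A k" using A k by (intro degree_mat_nonneg) auto
  moreover have "degree_mat n A k \<le> (\<Sum>j<n. 1)"
    unfolding degree_mat_def using A k by (intro sum_mono) auto
  ultimately have "0 \<le> tau n A * real n" "tau n A * real n \<le> 1 * real n" using k by simp_all
  then show "0 \<le> tau n A" "tau n A \<le> 1" using n by (simp_all add: zero_le_mult_iff mult_le_cancel_right)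
qed

lemma exp_neg_le_inverse_power:
  assumes "n \<ge> 1" "real k * ln (real n) \<le> x"
  shows "exp (- x) \<le> 1 / real n ^ k"
proof -
  have "exp (real k * ln (real n)) = real n ^ k" using assms(1) by (simp add: exp_of_nat_mult)
  then have "exp (- (real k * ln (real n))) = 1 / real n ^ k" by (simp add: exp_minus field_simps)
  then show ?thesis using assms(2) by (metis exp_le_cancel_iff neg_le_iff_le)
qed

lemma eventually_four_ln_square_le: "eventually (\<lambda>n::nat. 4 * (ln (real n))\<^sup>2 \<le> real n) sequentially"
proof -
  have "(\<lambda>n::nat. 4 * (ln (real n))\<^sup>2 / real n) \<longlonglongrightarrow> 0" by real_asymp
  then have "eventually (\<lambda>n::nat. 4 * (ln (real n))\<^sup>2 / real n < 1) sequentially"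
    by (rule order_tendstoD) simp
  then show ?thesis
    using eventually_ge_at_top[of 1] by eventually_elim (simp add: divide_less_eq)
qed

definition concentration_radius :: "nat \<Rightarrow> real" where
  "concentration_radius n = sqrt (2 * real n * ln (real n))"

lemma concentration_radius_nonneg: "0 \<le> concentration_radius n"
  unfolding concentration_radius_def by (cases "n = 0") auto

lemma power2_concentration_radius: "n \<ge> 1 \<Longrightarrow> (concentration_radius n)\<^sup>2 = 2 * real n * ln (real n)"
  unfolding concentration_radius_def by simp

lemma concentration_radius_le_half:
  assumes n: "n \<ge> 2" and T: "T > 0" "T\<^sup>2 * ln (real n) > 2" and ln: "4 * (ln (real n))\<^sup>2 \<le> real n"
  shows "concentration_radius n \<le> T * real n / 2"
proof -
  have ln0: "ln (real n) > 0" using n by simp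
  have "8 * ln (real n) * ln (real n) \<le> 2 * real n" using ln by (simp add: power2_eq_square)
  also have "\<dots> \<le> T\<^sup>2 * ln (real n) * real n" using T n by (intro mult_right_mono) auto
  finally have "8 * ln (real n) \<le> T\<^sup>2 * real n" using ln0 by (simp add: mult.commute mult.left_commute)
  then have "2 * real n * ln (real n) \<le> (T * real n / 2)\<^sup>2"
    using n by (simp add: power2_eq_square field_simps mult_right_mono)
  then show ?thesis unfolding concentration_radius_def using T n by (intro real_le_lsqrt) auto
qed

lemma frob_bound_at_concentration_radius:
  assumes T: "0 < T" "T \<le> 1" and n: "n \<ge> 1"
  defines "m \<equiv> T * real n" and "r \<equiv> concentration_radius n"
  shows "2 * sqrt (real n) / m + real n * (7 * r / m\<^sup>2 + 2 * (r / m) / m)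
         \<le> (2 + 9 * sqrt (2 * ln (real n))) / (T\<^sup>2 * sqrt (real n))"
proof -
  define q where "q = sqrt (2 * ln (real n))"
  define x where "x = sqrt (real n)"
  have x: "x > 0" "real n = x\<^sup>2" unfolding x_def using n by auto
  have "r = x * q"
    unfolding r_def q_def x_def concentration_radius_def by (simp add: real_sqrt_mult[symmetric] ac_simps)
  then have "2 * sqrt (real n) / m + real n * (7 * r / m\<^sup>2 + 2 * (r / m) / m)
      = 2 / (T * x) + 9 * q / (T\<^sup>2 * x)"
    unfolding m_def x_def[symmetric] using x T by (simp add: field_simps power2_eq_square)
  also have "2 / (T * x) \<le> 2 / (T\<^sup>2 * x)"
    using T x by (intro divide_left_mono) (auto simp: power2_eq_square mult_left_le_one_le)
  finally show ?thesis unfolding q_def x_def by (simp add: add_divide_distrib)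
qed

lemma smallo_ln_div_square_sqrt:
  fixes f T :: "nat \<Rightarrow> real"
  assumes "eventually (\<lambda>n. T n > 0 \<and>
    \<bar>f n\<bar> \<le> (2 + 9 * sqrt (2 * ln (real n))) / ((T n)\<^sup>2 * sqrt (real n))) sequentially"
  shows "f \<in> o(\<lambda>n. ln (real n) / ((T n)\<^sup>2 * sqrt (real n)))"
proof (rule landau_o.smallI)
  fix c :: real assume "c > 0"
  have "(\<lambda>n::nat. (2 + 9 * sqrt (2 * ln (real n))) / ln (real n)) \<longlonglongrightarrow> 0" by real_asymp
  then have "eventually (\<lambda>n. (2 + 9 * sqrt (2 * ln (real n))) / ln (real n) < c) sequentially"
    using \<open>c > 0\<close> by (rule order_tendstoD)
  with assms eventually_ge_at_top[of 3]
  show "eventually (\<lambda>n. norm (f n) \<le> c * norm (ln (real n) / ((T n)\<^sup>2 * sqrt (real n)))) sequentially"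
  proof eventually_elim
    case (elim n)
    then have ln: "ln (real n) > 0" and D: "(T n)\<^sup>2 * sqrt (real n) > 0" by simp_all
    have "\<bar>f n\<bar> \<le> (2 + 9 * sqrt (2 * ln (real n))) / ((T n)\<^sup>2 * sqrt (real n))" using elim by simp
    also have "\<dots> \<le> c * ln (real n) / ((T n)\<^sup>2 * sqrt (real n))"
      using elim(3) ln D by (intro divide_right_mono) (auto simp: divide_less_eq)
    finally show ?case using ln D by (simp add: abs_divide)
  qed
qed

section \<open>Concentration of degrees and two-path sums\<close>

lemma (in prob_space) indep_vars_cong_space:
  assumes "indep_vars M' X I" and "\<And>i \<omega>. i \<in> I \<Longrightarrow> \<omega> \<in> space M \<Longrightarrow> X i \<omega> = Y i \<omega>"
  shows "indep_vars M' Y I"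
proof -
  have "X i -` A \<inter> space M = Y i -` A \<inter> space M" if "i \<in> I" for i A
    using assms(2)[OF that] by auto
  moreover have "X i \<in> measurable M (M' i) \<longleftrightarrow> Y i \<in> measurable M (M' i)" if "i \<in> I" for i
    using assms(2)[OF that] by (intro measurable_cong) auto
  ultimately show ?thesis
    using assms(1) indep_sets_cong[of I I "\<lambda>i. {X i -` A \<inter> space M | A. A \<in> sets (M' i)}"
      "\<lambda>i. {Y i -` A \<inter> space M | A. A \<in> sets (M' i)}"]
    unfolding indep_vars_def2 by auto
qed

lemma (in prob_space) indep_vars_group:
  fixes X :: "'e \<Rightarrow> 'a \<Rightarrow> real" and g :: "'k \<Rightarrow> 'e set"
  assumes "indep_vars (\<lambda>_. borel) X E"
    and "\<And>k. k \<in> K \<Longrightarrow> g k \<subseteq> E" and "disjoint_family_on g K"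
    and "\<And>k. k \<in> K \<Longrightarrow> h k \<in> borel_measurable (PiM (g k) (\<lambda>_. borel))"
    and "\<And>k \<omega>. k \<in> K \<Longrightarrow> \<omega> \<in> space M \<Longrightarrow> Y k \<omega> = h k (restrict (\<lambda>e. X e \<omega>) (g k))"
  shows "indep_vars (\<lambda>_. borel) Y K"
proof -
  have "indep_vars (\<lambda>k. PiM (g k) (\<lambda>_. borel)) (\<lambda>k \<omega>. restrict (\<lambda>e. X e \<omega>) (g k)) K"
    using assms(1-3) by (rule indep_vars_restrict)
  then have "indep_vars (\<lambda>_. borel) (\<lambda>k \<omega>. h k (restrict (\<lambda>e. X e \<omega>) (g k))) K"
    using assms(4) by (rule indep_vars_compose2)
  then show ?thesis by (rule indep_vars_cong_space) (simp add: assms(5))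
qed

lemma sets_Collect_ge_borel:
  fixes f :: "'a \<Rightarrow> real"
  shows "f \<in> borel_measurable M \<Longrightarrow> {x \<in> space M. c \<le> f x} \<in> sets M"
  by measurable

lemma (in prob_space) Hoeffding_sum_deviation:
  fixes Y :: "'k \<Rightarrow> 'a \<Rightarrow> real"
  assumes "finite K" "indep_vars (\<lambda>_. borel) Y K"
    and "\<And>k \<omega>. k \<in> K \<Longrightarrow> \<omega> \<in> space M \<Longrightarrow> 0 \<le> Y k \<omega> \<and> Y k \<omega> \<le> b k"
    and "0 < (\<Sum>k\<in>K. (b k)\<^sup>2)" "0 \<le> t"
  shows "prob {\<omega> \<in> space M. t \<le> \<bar>(\<Sum>k\<in>K. Y k \<omega>) - (\<Sum>k\<in>K. expectation (Y k))\<bar>}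
           \<le> 2 * exp (-2 * t\<^sup>2 / (\<Sum>k\<in>K. (b k)\<^sup>2))"
proof -
  interpret Hoeffding_ineq M K Y "\<lambda>_. 0" b "\<Sum>k\<in>K. expectation (Y k)"
    by unfold_locales (use assms in \<open>auto intro: AE_I2\<close>)
  show ?thesis using Hoeffding_ineq_abs_ge[OF \<open>0 \<le> t\<close>] assms(4) by simp
qed

definition edge :: "nat \<Rightarrow> nat \<Rightarrow> nat \<times> nat" where
  "edge a b = (min a b, max a b)"

lemma edge_eqD: "edge a b = edge c d \<Longrightarrow> (a = c \<and> b = d) \<or> (a = d \<and> b = c)"
  unfolding edge_def by (auto simp: min_def max_def split: if_splits)

lemma edge_in_upper_pairs: "a < n \<Longrightarrow> b < n \<Longrightarrow> a \<noteq> b \<Longrightarrow> edge a b \<in> {(i, j). i < j \<and> j < n}"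
  unfolding edge_def by (auto simp: min_def max_def)

locale latent_space_model = prob_space M for M :: "'a measure" +
  fixes W :: "nat \<Rightarrow> 'a \<Rightarrow> nat \<Rightarrow> nat \<Rightarrow> real" and P :: "nat \<Rightarrow> nat \<Rightarrow> nat \<Rightarrow> real"
  assumes P_range: "\<And>n i j. i < n \<Longrightarrow> j < n \<Longrightarrow> 0 \<le> P n i j \<and> P n i j \<le> 1"
    and P_sym: "\<And>n i j. i < n \<Longrightarrow> j < n \<Longrightarrow> P n i j = P n j i"
    and P_diag: "\<And>n i. i < n \<Longrightarrow> P n i i = 0"
    and W_01: "\<And>n i j \<omega>. \<omega> \<in> space M \<Longrightarrow> i < n \<Longrightarrow> j < n \<Longrightarrow> W n \<omega> i j \<in> {0, 1}"
    and W_sym: "\<And>n i j \<omega>. \<omega> \<in> space M \<Longrightarrow> i < n \<Longrightarrow> j < n \<Longrightarrow> W n \<omega> i j = W n \<omega> j i"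
    and W_diag: "\<And>n i \<omega>. \<omega> \<in> space M \<Longrightarrow> i < n \<Longrightarrow> W n \<omega> i i = 0"
    and W_indep: "\<And>n. indep_vars (\<lambda>_. borel) (\<lambda>(i, j) \<omega>. W n \<omega> i j) {(i, j). i < j \<and> j < n}"
    and W_mean: "\<And>n i j. i < j \<Longrightarrow> j < n \<Longrightarrow> expectation (\<lambda>\<omega>. W n \<omega> i j) = P n i j"
begin

lemma W_range: "\<omega> \<in> space M \<Longrightarrow> i < n \<Longrightarrow> j < n \<Longrightarrow> 0 \<le> W n \<omega> i j \<and> W n \<omega> i j \<le> 1"
  using W_01[of \<omega> i n j] by auto

lemma W_edge:
  assumes "\<omega> \<in> space M" "a < n" "b < n"
  shows "W n \<omega> a b = (\<lambda>(i, j) \<omega>. W n \<omega> i j) (edge a b) \<omega>"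
  using W_sym[OF assms] unfolding edge_def by (cases "a \<le> b") (simp_all add: min_def max_def)

lemma W_measurable: assumes "a < n" "b < n" shows "random_variable borel (\<lambda>\<omega>. W n \<omega> a b)"
proof (cases "a = b")
  case True
  then show ?thesis
    using W_diag assms by (subst measurable_cong[where g = "\<lambda>_. 0"]) auto
next
  case False
  have "\<forall>e\<in>{(i, j). i < j \<and> j < n}. random_variable borel ((\<lambda>(i, j) \<omega>. W n \<omega> i j) e)"
    using W_indep[of n] unfolding indep_vars_def2 by (rule conjunct1)
  then have "random_variable borel ((\<lambda>(i, j) \<omega>. W n \<omega> i j) (edge a b))"
    using edge_in_upper_pairs[OF assms False] by (rule bspec)
  then show ?thesis
    using W_edge assms by (subst measurable_cong) auto
qed

lemma W_integrable: "a < n \<Longrightarrow> b < n \<Longrightarrow> integrable M (\<lambda>\<omega>. W n \<omega> a b)"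
  using W_range by (intro integrable_const_bound[where B = 1] W_measurable) auto

lemma expectation_W:
  assumes "a < n" "b < n"
  shows "expectation (\<lambda>\<omega>. W n \<omega> a b) = P n a b"
proof -
  consider "a = b" | "a < b" | "b < a" by linarith
  then show ?thesis
  proof cases
    case 1
    then have "expectation (\<lambda>\<omega>. W n \<omega> a b) = expectation (\<lambda>\<omega>. 0)"
      using W_diag assms by (intro Bochner_Integration.integral_cong) auto
    then show ?thesis using 1 P_diag assms by simp
  next
    case 2
    then show ?thesis using W_mean assms by simp
  next
    case 3
    then have "expectation (\<lambda>\<omega>. W n \<omega> a b) = expectation (\<lambda>\<omega>. W n \<omega> b a)"
      using W_sym assms by (intro Bochner_Integration.integral_cong) auto
    then show ?thesis using 3 W_mean P_sym assms by simp
  qed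
qed

lemma expectation_two_path:
  assumes "i < n" "j < n" "k < n" "i \<noteq> j" "k \<noteq> i" "k \<noteq> j"
  shows "expectation (\<lambda>\<omega>. W n \<omega> i k * W n \<omega> k j) = P n i k * P n k j"
proof -
  let ?X = "\<lambda>(i, j) \<omega>. W n \<omega> i j"
  have ne: "edge i k \<noteq> edge k j" using edge_eqD assms by blast
  have edges: "{edge i k, edge k j} \<subseteq> {(i, j). i < j \<and> j < n}"
    using edge_in_upper_pairs assms by auto
  have X_eq: "?X (edge a b) \<omega> = W n \<omega> a b" if "\<omega> \<in> space M" "a < n" "b < n" for a b \<omega>
    using W_edge[OF that] by simp
  have "expectation (\<lambda>\<omega>. W n \<omega> i k * W n \<omega> k j) = expectation (\<lambda>\<omega>. \<Prod>e\<in>{edge i k, edge k j}. ?X e \<omega>)"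
    using ne X_eq assms by (intro Bochner_Integration.integral_cong) auto
  also have "\<dots> = (\<Prod>e\<in>{edge i k, edge k j}. expectation (?X e))"
  proof (rule indep_vars_lebesgue_integral)
    show "indep_vars (\<lambda>_. borel) ?X {edge i k, edge k j}"
      using indep_vars_subset[OF W_indep edges] .
    show "integrable M (?X e)" if "e \<in> {edge i k, edge k j}" for e
      using that edges W_integrable by auto
  qed simp
  also have "\<dots> = expectation (?X (edge i k)) * expectation (?X (edge k j))"
    using ne by simp
  also have "expectation (?X (edge i k)) = expectation (\<lambda>\<omega>. W n \<omega> i k)"
    using X_eq assms by (intro Bochner_Integration.integral_cong) auto
  also have "expectation (?X (edge k j)) = expectation (\<lambda>\<omega>. W n \<omega> k j)"
    using X_eq assms by (intro Bochner_Integration.integral_cong) auto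
  finally show ?thesis using expectation_W assms by simp
qed

lemma indep_vars_row:
  assumes "i < n"
  shows "indep_vars (\<lambda>_. borel) (\<lambda>k \<omega>. W n \<omega> i k) ({..<n} - {i})"
proof (rule indep_vars_group[OF W_indep[of n], where g = "\<lambda>k. {edge i k}" and h = "\<lambda>k f. f (edge i k)"])
  show "{edge i k} \<subseteq> {(i, j). i < j \<and> j < n}" if "k \<in> {..<n} - {i}" for k
    using edge_in_upper_pairs[of i n k] that assms by auto
  show "disjoint_family_on (\<lambda>k. {edge i k}) ({..<n} - {i})"
    unfolding disjoint_family_on_def using edge_eqD by fastforce
  show "W n \<omega> i k = (\<lambda>f. f (edge i k)) (restrict (\<lambda>e. (\<lambda>(i, j) \<omega>. W n \<omega> i j) e \<omega>) {edge i k})"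
    if "k \<in> {..<n} - {i}" "\<omega> \<in> space M" for k \<omega>
    using W_edge[of \<omega> i n k] that assms by simp
qed (rule measurable_component_singleton, simp)

lemma indep_vars_two_path:
  assumes "i < n" "j < n" "i \<noteq> j"
  shows "indep_vars (\<lambda>_. borel) (\<lambda>k \<omega>. W n \<omega> i k * W n \<omega> k j / d k) ({..<n} - {i, j})"
proof (rule indep_vars_group[OF W_indep[of n], where g = "\<lambda>k. {edge i k, edge k j}"
      and h = "\<lambda>k f. f (edge i k) * f (edge k j) / d k"])
  show "{edge i k, edge k j} \<subseteq> {(i, j). i < j \<and> j < n}" if "k \<in> {..<n} - {i, j}" for k
    using edge_in_upper_pairs[of i n k] edge_in_upper_pairs[of k n j] that assms by auto
  show "disjoint_family_on (\<lambda>k. {edge i k, edge k j}) ({..<n} - {i, j})"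
    unfolding disjoint_family_on_def using edge_eqD assms(3) by fastforce
  show "(\<lambda>f. f (edge i k) * f (edge k j) / d k) \<in> borel_measurable (PiM {edge i k, edge k j} (\<lambda>_. borel))"
    for k by measurable
  show "W n \<omega> i k * W n \<omega> k j / d k
      = (\<lambda>f. f (edge i k) * f (edge k j) / d k) (restrict (\<lambda>e. (\<lambda>(i, j) \<omega>. W n \<omega> i j) e \<omega>) {edge i k, edge k j})"
    if "k \<in> {..<n} - {i, j}" "\<omega> \<in> space M" for k \<omega>
    using W_edge[of \<omega> i n k] W_edge[of \<omega> k n j] that assms by simp
qed

definition degree_deviation_event :: "nat \<Rightarrow> real \<Rightarrow> nat \<Rightarrow> 'a set" where
  "degree_deviation_event n s i =
     {\<omega> \<in> space M. s \<le> \<bar>degree_mat n (W n \<omega>) i - degree_mat n (P n) i\<bar>}"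

definition two_path_deviation_event :: "nat \<Rightarrow> real \<Rightarrow> nat \<Rightarrow> nat \<Rightarrow> 'a set" where
  "two_path_deviation_event n t i j =
     {\<omega> \<in> space M. t \<le> \<bar>two_path_sum n (W n \<omega>) (degree_mat n (P n)) i j
                            - two_path_sum n (P n) (degree_mat n (P n)) i j\<bar>}"

lemma degree_deviation_prob_le:
  assumes "2 \<le> n" "i < n" "0 \<le> s"
  shows "prob (degree_deviation_event n s i) \<le> 2 * exp (-2 * s\<^sup>2 / (real n - 1))"
proof -
  define K where "K = {..<n} - {i}"
  have card: "(\<Sum>k\<in>K. 1\<^sup>2) = real n - 1"
    unfolding K_def using assms by (simp add: card_Diff_singleton of_nat_diff)
  have degree: "degree_mat n A i = (\<Sum>k\<in>K. A i k)" if "A i i = 0" for A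
    unfolding K_def degree_mat_def using that assms by (intro sum.mono_neutral_right) auto
  have mean: "(\<Sum>k\<in>K. expectation (\<lambda>\<omega>. W n \<omega> i k)) = degree_mat n (P n) i"
    unfolding degree[of "P n", OF P_diag[OF assms(2)]] K_def using expectation_W assms by simp
  have "degree_deviation_event n s i
      = {\<omega> \<in> space M. s \<le> \<bar>(\<Sum>k\<in>K. W n \<omega> i k) - (\<Sum>k\<in>K. expectation (\<lambda>\<omega>. W n \<omega> i k))\<bar>}"
    unfolding mean degree_deviation_event_def using degree W_diag assms by auto
  also have "prob \<dots> \<le> 2 * exp (-2 * s\<^sup>2 / (\<Sum>k\<in>K. 1\<^sup>2))"
    using assms W_range card unfolding K_def by (intro Hoeffding_sum_deviation indep_vars_row) auto
  finally show ?thesis unfolding card .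
qed

lemma two_path_deviation_prob_le:
  assumes "3 \<le> n" "i < n" "j < n" "i \<noteq> j" "0 \<le> t"
    and m: "0 < m" "\<And>k. k < n \<Longrightarrow> m \<le> degree_mat n (P n) k"
  shows "prob (two_path_deviation_event n t i j) \<le> 2 * exp (-2 * t\<^sup>2 * m\<^sup>2 / real n)"
proof -
  define d where "d = degree_mat n (P n)"
  define K where "K = {..<n} - {i, j}"
  have d: "d k > 0" if "k < n" for k using m that unfolding d_def by (metis order.strict_trans2)
  have path: "two_path_sum n A d i j = (\<Sum>k\<in>K. A i k * A k j / d k)" if "A i i = 0" "A j j = 0" for A
    unfolding K_def two_path_sum_def using that assms by (intro sum.mono_neutral_right) auto
  have mean: "(\<Sum>k\<in>K. expectation (\<lambda>\<omega>. W n \<omega> i k * W n \<omega> k j / d k)) = two_path_sum n (P n) d i j"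
    unfolding path[of "P n", OF P_diag[OF assms(2)] P_diag[OF assms(3)]] K_def using expectation_two_path assms by simp
  have "card K = n - 2" unfolding K_def using assms by (simp add: card_Diff_subset)
  then have "K \<noteq> {}" using assms by auto
  then have sum_pos: "0 < (\<Sum>k\<in>K. (1 / d k)\<^sup>2)"
    using d by (intro sum_pos) (auto simp: K_def less_imp_neq[symmetric])
  have "(\<Sum>k\<in>K. (1 / d k)\<^sup>2) \<le> (\<Sum>k\<in>K. (1 / m)\<^sup>2)"
    using d m by (intro sum_mono power_mono) (auto simp: K_def d_def less_imp_le intro: frac_le)
  also have "\<dots> \<le> (\<Sum>k<n. (1 / m)\<^sup>2)" unfolding K_def by (intro sum_mono2) auto
  finally have sum: "0 < (\<Sum>k\<in>K. (1 / d k)\<^sup>2)" "(\<Sum>k\<in>K. (1 / d k)\<^sup>2) \<le> real n / m\<^sup>2"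
    using sum_pos by (auto simp: power_divide)
  have "two_path_deviation_event n t i j
      = {\<omega> \<in> space M. t \<le> \<bar>(\<Sum>k\<in>K. W n \<omega> i k * W n \<omega> k j / d k)
                           - (\<Sum>k\<in>K. expectation (\<lambda>\<omega>. W n \<omega> i k * W n \<omega> k j / d k))\<bar>}"
    unfolding two_path_deviation_event_def d_def[symmetric] mean using path W_diag assms by auto
  also have "prob \<dots> \<le> 2 * exp (-2 * t\<^sup>2 / (\<Sum>k\<in>K. (1 / d k)\<^sup>2))"
  proof (intro Hoeffding_sum_deviation)
    show "0 \<le> W n \<omega> i k * W n \<omega> k j / d k \<and> W n \<omega> i k * W n \<omega> k j / d k \<le> 1 / d k"
      if "k \<in> K" "\<omega> \<in> space M" for k \<omega>
      using W_range[of \<omega> i n k] W_range[of \<omega> k n j] d[of k] that assms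
      by (auto simp: K_def mult_le_one intro: divide_right_mono)
  qed (use assms sum indep_vars_two_path in \<open>auto simp: K_def\<close>)
  also have "\<dots> \<le> 2 * exp (-2 * t\<^sup>2 * m\<^sup>2 / real n)"
  proof -
    have "t\<^sup>2 / (real n / m\<^sup>2) \<le> t\<^sup>2 / (\<Sum>k\<in>K. (1 / d k)\<^sup>2)"
      using sum assms(1) m(1) by (intro divide_left_mono) auto
    then show ?thesis using m by (simp add: field_simps)
  qed
  finally show ?thesis .
qed

lemma degree_deviation_event_sets: "i < n \<Longrightarrow> degree_deviation_event n s i \<in> sets M"
  unfolding degree_deviation_event_def degree_mat_def using W_measurable
  by (intro sets_Collect_ge_borel borel_measurable_abs borel_measurable_diff borel_measurable_sum
      borel_measurable_const) auto

lemma two_path_deviation_event_sets: "i < n \<Longrightarrow> j < n \<Longrightarrow> two_path_deviation_event n t i j \<in> sets M"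
  unfolding two_path_deviation_event_def two_path_sum_def using W_measurable
  by (intro sets_Collect_ge_borel borel_measurable_abs borel_measurable_diff borel_measurable_sum
      borel_measurable_divide borel_measurable_times borel_measurable_const) auto

definition deviation_event :: "nat \<Rightarrow> real \<Rightarrow> real \<Rightarrow> 'a set" where
  "deviation_event n s t = (\<Union>i<n. degree_deviation_event n s i) \<union>
     (\<Union>i<n. \<Union>j\<in>{..<n} - {i}. two_path_deviation_event n t i j)"

lemma deviation_event_sets: "deviation_event n s t \<in> sets M"
  unfolding deviation_event_def
  using degree_deviation_event_sets two_path_deviation_event_sets by (intro sets.Un sets.finite_UN) auto

lemma measure_deviation_event_le:
  assumes "3 \<le> n" "0 < m" "\<And>k. k < n \<Longrightarrow> m \<le> degree_mat n (P n) k" "0 \<le> s" "0 \<le> t"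
  shows "measure M (deviation_event n s t)
    \<le> real n * (2 * exp (-2 * s\<^sup>2 / (real n - 1))) + real n * real n * (2 * exp (-2 * t\<^sup>2 * m\<^sup>2 / real n))"
proof -
  let ?a = "2 * exp (-2 * s\<^sup>2 / (real n - 1))" and ?b = "2 * exp (-2 * t\<^sup>2 * m\<^sup>2 / real n)"
  have "measure M (deviation_event n s t)
      \<le> (\<Sum>i<n. measure M (degree_deviation_event n s i))
        + (\<Sum>i<n. \<Sum>j\<in>{..<n} - {i}. measure M (two_path_deviation_event n t i j))"
    unfolding deviation_event_def
    using degree_deviation_event_sets two_path_deviation_event_sets
    by (intro order.trans[OF measure_Un_le] add_mono order.trans[OF measure_UNION_le] sum_mono
        sets.finite_UN) auto
  also have "\<dots> \<le> (\<Sum>i<n. ?a) + (\<Sum>i<n. \<Sum>j\<in>{..<n} - {i}. ?b)"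
    using assms by (intro add_mono sum_mono degree_deviation_prob_le two_path_deviation_prob_le) auto
  also have "\<dots> \<le> real n * ?a + real n * real n * ?b"
    by (simp add: card_Diff_singleton of_nat_diff) (intro mult_left_mono mult_right_mono, auto)
  finally show ?thesis .
qed

lemma measure_deviation_event_at_radius:
  assumes n: "3 \<le> n" and m: "0 < m" "\<And>k. k < n \<Longrightarrow> m \<le> degree_mat n (P n) k"
  shows "measure M (deviation_event n (concentration_radius n) (concentration_radius n / m)) \<le> 4 / (real n)\<^sup>2"
proof -
  let ?r = "concentration_radius n"
  have r2: "?r\<^sup>2 = 2 * real n * ln (real n)" using n by (intro power2_concentration_radius) auto
  have ln: "0 \<le> ln (real n)" using n by simp
  have "4 * ln (real n) * 1 \<le> 4 * ln (real n) * (real n / (real n - 1))"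
    using n ln by (intro mult_left_mono) (auto simp: field_simps)
  then have "real 4 * ln (real n) \<le> 2 * ?r\<^sup>2 / (real n - 1)" unfolding r2 by (simp add: field_simps)
  then have degree: "exp (-2 * ?r\<^sup>2 / (real n - 1)) \<le> 1 / real n ^ 4"
    using n exp_neg_le_inverse_power[of n 4] by simp
  have "2 * (?r / m)\<^sup>2 * m\<^sup>2 / real n = real 4 * ln (real n)"
    using m n unfolding power_divide r2 by (simp add: field_simps)
  then have path: "exp (-2 * (?r / m)\<^sup>2 * m\<^sup>2 / real n) \<le> 1 / real n ^ 4"
    using n exp_neg_le_inverse_power[of n 4] by simp
  have "measure M (deviation_event n ?r (?r / m))
      \<le> real n * (2 * exp (-2 * ?r\<^sup>2 / (real n - 1))) + real n * real n * (2 * exp (-2 * (?r / m)\<^sup>2 * m\<^sup>2 / real n))"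
    using m concentration_radius_nonneg by (intro measure_deviation_event_le[OF n m]) auto
  also have "\<dots> \<le> real n * (2 * (1 / real n ^ 4)) + real n * real n * (2 * (1 / real n ^ 4))"
    using degree path by (intro add_mono mult_left_mono) auto
  also have "\<dots> \<le> 4 / (real n)\<^sup>2"
    using n by (simp add: field_simps power2_eq_square power4_eq_xxxx)
  finally show ?thesis .
qed

lemma frob_norm_le_off_deviation_event:
  assumes "\<omega> \<in> space M - deviation_event n s t"
    and "0 < m" "\<And>k. k < n \<Longrightarrow> m \<le> degree_mat n (P n) k" "0 \<le> s" "s \<le> m / 2" "0 \<le> t"
  shows "frob_norm n (\<lambda>i j. mat_mult_n n (norm_laplacian n (W n \<omega>)) (norm_laplacian n (W n \<omega>)) i j
                          - mat_mult_n n (norm_laplacian n (P n)) (norm_laplacian n (P n)) i j)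
         \<le> 2 * sqrt (real n) / m + real n * (7 * s / m\<^sup>2 + 2 * t / m)"
proof (rule frob_norm_laplacian_square_diff_le)
  have \<omega>: "\<omega> \<in> space M" using assms(1) by simp
  show "\<bar>degree_mat n (W n \<omega>) k - degree_mat n (P n) k\<bar> \<le> s" if "k < n" for k
    using assms(1) that unfolding deviation_event_def degree_deviation_event_def by (force simp: not_le)
  show "\<bar>two_path_sum n (W n \<omega>) (degree_mat n (P n)) i j - two_path_sum n (P n) (degree_mat n (P n)) i j\<bar> \<le> t"
    if "i < n" "j < n" "i \<noteq> j" for i j
    using assms(1) that unfolding deviation_event_def two_path_deviation_event_def by (force simp: not_le)
qed (use assms W_range W_sym P_range P_sym in auto)

lemma AE_eventually_not_deviation_event:
  assumes "eventually (\<lambda>n. 3 \<le> n \<and> 0 < m n \<and> (\<forall>k<n. m n \<le> degree_mat n (P n) k)) sequentially"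
  shows "AE \<omega> in M. eventually (\<lambda>n.
           \<omega> \<in> space M - deviation_event n (concentration_radius n) (concentration_radius n / m n)) sequentially"
proof (rule borel_cantelli_AE1)
  show "summable (\<lambda>n. measure M (deviation_event n (concentration_radius n) (concentration_radius n / m n)))"
  proof (rule summable_comparison_test_ev)
    show "eventually (\<lambda>n. norm (measure M (deviation_event n (concentration_radius n) (concentration_radius n / m n)))
        \<le> 4 * inverse ((real n)\<^sup>2)) sequentially"
      using assms
    proof eventually_elim
      case (elim n)
      then have "measure M (deviation_event n (concentration_radius n) (concentration_radius n / m n)) \<le> 4 / (real n)\<^sup>2"
        by (intro measure_deviation_event_at_radius) auto
      then show ?case by (simp add: divide_inverse)
    qed
  qed (intro summable_mult inverse_power_summable, auto)
qed (auto simp: deviation_event_sets emeasure_eq_measure)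

lemma eventually_concentration_radius_le_half_min_degree:
  assumes "\<exists>N>0. \<forall>n>N. (tau n (P n))\<^sup>2 * ln (real n) > 2"
  shows "eventually (\<lambda>n. 3 \<le> n \<and> 0 < tau n (P n) \<and> tau n (P n) \<le> 1
           \<and> (\<forall>k<n. tau n (P n) * real n \<le> degree_mat n (P n) k)
           \<and> concentration_radius n \<le> tau n (P n) * real n / 2) sequentially"
proof -
  obtain N where N: "\<forall>n>N. (tau n (P n))\<^sup>2 * ln (real n) > 2" using assms by auto
  show ?thesis
    using eventually_gt_at_top[of N] eventually_ge_at_top[of 3] eventually_four_ln_square_le
  proof eventually_elim
    case (elim n)
    then have gt: "(tau n (P n))\<^sup>2 * ln (real n) > 2" using N by auto
    have bounds: "0 \<le> tau n (P n)" "tau n (P n) \<le> 1" "\<forall>k<n. tau n (P n) * real n \<le> degree_mat n (P n) k"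
      using elim P_range tau_bounds[of n "P n"] by auto
    have "tau n (P n) \<noteq> 0" using gt by auto
    with bounds have "0 < tau n (P n)" by simp
    then show ?case using elim gt bounds concentration_radius_le_half[of n "tau n (P n)"] by auto
  qed
qed

lemma AE_eventually_frob_norm_le:
  assumes "\<exists>N>0. \<forall>n>N. (tau n (P n))\<^sup>2 * ln (real n) > 2"
  shows "AE \<omega> in M. eventually (\<lambda>n. tau n (P n) > 0 \<and>
           \<bar>frob_norm n (\<lambda>i j.
                  mat_mult_n n (norm_laplacian n (W n \<omega>)) (norm_laplacian n (W n \<omega>)) i j
                - mat_mult_n n (norm_laplacian n (P n)) (norm_laplacian n (P n)) i j)\<bar>
             \<le> (2 + 9 * sqrt (2 * ln (real n))) / ((tau n (P n))\<^sup>2 * sqrt (real n))) sequentially"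
proof -
  let ?T = "\<lambda>n. tau n (P n)"
  note large = eventually_concentration_radius_le_half_min_degree[OF assms]
  have "AE \<omega> in M. eventually (\<lambda>n. \<omega> \<in> space M
          - deviation_event n (concentration_radius n) (concentration_radius n / (?T n * real n))) sequentially"
    by (rule AE_eventually_not_deviation_event, rule eventually_mono[OF large]) auto
  then show ?thesis
  proof (rule AE_mp, intro AE_I2 impI)
    fix \<omega> assume "eventually (\<lambda>n. \<omega> \<in> space M
          - deviation_event n (concentration_radius n) (concentration_radius n / (?T n * real n))) sequentially"
    then show "eventually (\<lambda>n. ?T n > 0 \<and> \<bar>frob_norm n (\<lambda>i j.
                  mat_mult_n n (norm_laplacian n (W n \<omega>)) (norm_laplacian n (W n \<omega>)) i j
                - mat_mult_n n (norm_laplacian n (P n)) (norm_laplacian n (P n)) i j)\<bar>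
             \<le> (2 + 9 * sqrt (2 * ln (real n))) / ((?T n)\<^sup>2 * sqrt (real n))) sequentially"
      using large
    proof eventually_elim
      case (elim n)
      let ?r = "concentration_radius n" and ?m = "?T n * real n"
      have "frob_norm n (\<lambda>i j.
                  mat_mult_n n (norm_laplacian n (W n \<omega>)) (norm_laplacian n (W n \<omega>)) i j
                - mat_mult_n n (norm_laplacian n (P n)) (norm_laplacian n (P n)) i j)
          \<le> 2 * sqrt (real n) / ?m + real n * (7 * ?r / ?m\<^sup>2 + 2 * (?r / ?m) / ?m)"
        using elim concentration_radius_nonneg by (intro frob_norm_le_off_deviation_event) auto
      also have "\<dots> \<le> (2 + 9 * sqrt (2 * ln (real n))) / ((?T n)\<^sup>2 * sqrt (real n))"
        using elim by (intro frob_bound_at_concentration_radius) auto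
      finally show ?case using elim frob_norm_nonneg by simp
    qed
  qed
qed

end

theorem theorem2p1:
  fixes M :: "'a measure"
    and W :: "nat \<Rightarrow> 'a \<Rightarrow> nat \<Rightarrow> nat \<Rightarrow> real"
    and P :: "nat \<Rightarrow> nat \<Rightarrow> nat \<Rightarrow> real"
  assumes "prob_space M"
    and P_range: "\<And>n i j. i < n \<Longrightarrow> j < n \<Longrightarrow> 0 \<le> P n i j \<and> P n i j \<le> 1"
    and P_sym: "\<And>n i j. i < n \<Longrightarrow> j < n \<Longrightarrow> P n i j = P n j i"
    and P_diag: "\<And>n i. i < n \<Longrightarrow> P n i i = 0"
    and W_01: "\<And>n i j \<omega>. \<omega> \<in> space M \<Longrightarrow> i < n \<Longrightarrow> j < n \<Longrightarrow> W n \<omega> i j \<in> {0, 1}"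
    and W_sym: "\<And>n i j \<omega>. \<omega> \<in> space M \<Longrightarrow> i < n \<Longrightarrow> j < n \<Longrightarrow> W n \<omega> i j = W n \<omega> j i"
    and W_diag: "\<And>n i \<omega>. \<omega> \<in> space M \<Longrightarrow> i < n \<Longrightarrow> W n \<omega> i i = 0"
    and W_indep: "\<And>n. prob_space.indep_vars M (\<lambda>_. borel) (\<lambda>(i, j) \<omega>. W n \<omega> i j)
                          {(i, j). i < j \<and> j < n}"
    and W_mean: "\<And>n i j. i < j \<Longrightarrow> j < n \<Longrightarrow>
                   prob_space.expectation M (\<lambda>\<omega>. W n \<omega> i j) = P n i j"
    and tau_cond: "\<exists>N>0. \<forall>n>N. (tau n (P n))\<^sup>2 * ln (real n) > 2"
  shows "AE \<omega> in M.
           (\<lambda>n. frob_norm n (\<lambda>i j.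
                  mat_mult_n n (norm_laplacian n (W n \<omega>)) (norm_laplacian n (W n \<omega>)) i j
                - mat_mult_n n (norm_laplacian n (P n)) (norm_laplacian n (P n)) i j))
         \<in> o(\<lambda>n. ln (real n) / ((tau n (P n))\<^sup>2 * sqrt (real n)))"
proof -
  interpret latent_space_model M W P
    by (intro latent_space_model.intro latent_space_model_axioms.intro) (fact assms)+
  show ?thesis
    using AE_eventually_frob_norm_le[OF tau_cond]
    by (rule AE_mp) (intro AE_I2 impI smallo_ln_div_square_sqrt)
qed

end
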